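(* For every $\lambda\in\Lambda$, the map $Q^*_\lambda=P_\lambda+Q$ has a unique fixed point $h(\lambda)$ in the closed ball $\{z:|z-1|\le |Q(1)|/p\}$. The resulting function $h:\Lambda\to\{z:|z-1|\le|Q(1)|/p\}$, $\lambda\mapsto h(\lambda)$, is holomorphic on $\Lambda$ (it is the uniform limit on $\Lambda$ of rational functions in $\lambda$ without poles in $\Lambda$, equivalently given by a power series convergent on $\Lambda$).
   Context: Let $p$ be a prime and $\mathbb C_p$ the completion of an algebraic closure of $\mathbb Q_p$, with $p$-adic absolute value $|\cdot|$, $|p|=1/p$. Let $\Lambda=\{\lambda\in\mathbb C_p:|\lambda-1|<1\}$ and $P_\lambda(z)=\frac{\lambda}{p}z^p+\left(1-\frac{\lambda}{p}\right)z^{p+1}$ for $\lambda\in\Lambda$. Let $\rho=p^{-1/(p-1)}$. Fix $\hat r\in|\mathbb C_p^*|$ with $\hat r>1$, $B=\{z:|z|\le\hat r\}$, and let $\mathcal H(B)$ be the power series $\sum a_iz^i$ convergent on $B$ with norm $\|f\|_B=\sup_i|a_i|\hat r^{\,i}$. Fix $Q\in\mathcal H(B)$ with $\|Q\|_B<\rho$. *)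

theory Defs
  imports "HOL-Analysis.Analysis" "HOL-Computational_Algebra.Polynomial"
begin

text \<open>Abstract model of C_p: a field of characteristic 0 with an absolute value
  that is non-archimedean, normalised by |p| = 1/p, complete, algebraically closed,
  and in which the algebraic numbers are dense. These properties characterise C_p
  up to isometric isomorphism.\<close>

definition is_Cp :: "nat \<Rightarrow> ('a::field_char_0 \<Rightarrow> real) \<Rightarrow> bool" where
  "is_Cp p av \<longleftrightarrow>
     prime p \<and>
     (\<forall>x. av x \<ge> 0) \<and> (\<forall>x. av x = 0 \<longleftrightarrow> x = 0) \<and>
     (\<forall>x y. av (x * y) = av x * av y) \<and>
     (\<forall>x y. av (x + y) \<le> max (av x) (av y)) \<and>
     av (of_nat p) = 1 / real p \<and>
     (\<forall>s::nat \<Rightarrow> 'a. (\<forall>e>0. \<exists>N. \<forall>m\<ge>N. \<forall>n\<ge>N. av (s m - s n) < e)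
          \<longrightarrow> (\<exists>l. (\<lambda>n. av (s n - l)) \<longlonglongrightarrow> 0)) \<and>
     (\<forall>P::'a poly. degree P > 0 \<longrightarrow> (\<exists>x. poly P x = 0)) \<and>
     (\<forall>x. \<forall>e>0. \<exists>y. algebraic y \<and> av (x - y) < e)"

definition ps_sums :: "('a::field \<Rightarrow> real) \<Rightarrow> (nat \<Rightarrow> 'a) \<Rightarrow> 'a \<Rightarrow> 'a \<Rightarrow> bool" where
  "ps_sums av a z v \<longleftrightarrow> (\<lambda>n. av ((\<Sum>i<n. a i * z ^ i) - v)) \<longlonglongrightarrow> 0"

definition Pfam :: "nat \<Rightarrow> 'a::field \<Rightarrow> 'a \<Rightarrow> 'a" where
  "Pfam p lam z = (lam / of_nat p) * z ^ p + (1 - lam / of_nat p) * z ^ (p + 1)"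

definition holo_Lambda :: "('a::field \<Rightarrow> real) \<Rightarrow> ('a \<Rightarrow> 'a) \<Rightarrow> bool" where
  "holo_Lambda av h \<longleftrightarrow>
     (\<exists>c::nat \<Rightarrow> 'a. \<forall>lam. av (lam - 1) < 1 \<longrightarrow> ps_sums av c (lam - 1) (h lam))"

end

(* Put z = 1 + w and L = 1 / lambda. Then P_lambda(z) + Q(z) = z says exactly that w is a fixed
   point of
     T_L(w) = w - z^p w + p L (z^(p+1) - z + Q(z)),
   and on the ball |w| <= |Q(1)|/p this map is a contraction with constant max (|Q(1)|/p) (1/p) in
   every complete ultrametric ring in which |p x| <= |x|/p and |L| <= 1. In C_p this gives the
   uniqueness of the fixed point. Running the same contraction in the ring of power series in
   X = lambda - 1 with bounded coefficients and the sup norm, with L = 1/(1 + X), gives a power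
   series W. Evaluation at lambda - 1, for |lambda - 1| < 1, is a continuous ring homomorphism that
   commutes with Q, so h(lambda) = 1 + W(lambda - 1) is the fixed point for lambda, and h is given
   by a power series convergent on Lambda. *)

theory Submission
  imports Defs
begin

unbundle no vec_syntax
unbundle fps_syntax

section \<open>Complete ultrametric rings\<close>

text \<open>\<open>S\<close> is a subring and \<open>N\<close> only submultiplicative, so that besides \<open>\<complex>\<^sub>p\<close> itself the
  power series with bounded coefficients under the sup norm are an instance.\<close>
locale ultrametric_banach_ring =
  fixes S :: "'r::comm_ring_1 set" and N :: "'r \<Rightarrow> real"
  assumes zero_mem: "0 \<in> S" and one_mem: "1 \<in> S"
    and add_mem: "x \<in> S \<Longrightarrow> y \<in> S \<Longrightarrow> x + y \<in> S"
    and uminus_mem: "x \<in> S \<Longrightarrow> - x \<in> S"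
    and mult_mem: "x \<in> S \<Longrightarrow> y \<in> S \<Longrightarrow> x * y \<in> S"
    and N_nonneg: "x \<in> S \<Longrightarrow> 0 \<le> N x"
    and N_0: "N 0 = 0"
    and N_eq_0: "x \<in> S \<Longrightarrow> N x = 0 \<Longrightarrow> x = 0"
    and N_add: "x \<in> S \<Longrightarrow> y \<in> S \<Longrightarrow> N (x + y) \<le> max (N x) (N y)"
    and N_uminus: "x \<in> S \<Longrightarrow> N (- x) = N x"
    and N_mult: "x \<in> S \<Longrightarrow> y \<in> S \<Longrightarrow> N (x * y) \<le> N x * N y"
    and N_1: "N 1 \<le> 1"
    and Cauchy_convergent: "\<And>s. (\<forall>n. s n \<in> S) \<Longrightarrow>
        (\<forall>e>0. \<exists>M. \<forall>m\<ge>M. \<forall>n\<ge>M. N (s m - s n) < e) \<Longrightarrow>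
        \<exists>l\<in>S. (\<lambda>n. N (s n - l)) \<longlonglongrightarrow> 0"
begin

lemma diff_mem: "x \<in> S \<Longrightarrow> y \<in> S \<Longrightarrow> x - y \<in> S"
  using add_mem uminus_mem by (metis diff_conv_add_uminus)

lemma power_mem: "x \<in> S \<Longrightarrow> x ^ n \<in> S"
  by (induction n) (auto simp: one_mem mult_mem)

lemma of_nat_mem: "of_nat n \<in> S"
  by (induction n) (auto simp: zero_mem one_mem add_mem)

lemma sum_mem: "(\<And>i. i \<in> A \<Longrightarrow> f i \<in> S) \<Longrightarrow> sum f A \<in> S"
  by (induction A rule: infinite_finite_induct) (auto simp: zero_mem add_mem)

lemmas mem_rules =
  zero_mem one_mem add_mem uminus_mem mult_mem diff_mem power_mem of_nat_mem sum_mem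

lemma N_diff: "x \<in> S \<Longrightarrow> y \<in> S \<Longrightarrow> N (x - y) \<le> max (N x) (N y)"
  using N_add[of x "- y"] N_uminus[of y] uminus_mem by simp

lemma N_minus_commute: "x \<in> S \<Longrightarrow> y \<in> S \<Longrightarrow> N (x - y) = N (y - x)"
  using N_uminus[of "y - x"] diff_mem by simp

lemma N_triangle: "x \<in> S \<Longrightarrow> y \<in> S \<Longrightarrow> z \<in> S \<Longrightarrow> N (x - z) \<le> max (N (x - y)) (N (y - z))"
  using N_add[of "x - y" "y - z"] diff_mem by simp

lemma N_add_le: "x \<in> S \<Longrightarrow> y \<in> S \<Longrightarrow> N x \<le> B \<Longrightarrow> N y \<le> B \<Longrightarrow> N (x + y) \<le> B"
  using N_add[of x y] by simp

lemma N_diff_le: "x \<in> S \<Longrightarrow> y \<in> S \<Longrightarrow> N x \<le> B \<Longrightarrow> N y \<le> B \<Longrightarrow> N (x - y) \<le> B"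
  using N_diff[of x y] by simp

lemma N_mult_le: "x \<in> S \<Longrightarrow> y \<in> S \<Longrightarrow> N x \<le> a \<Longrightarrow> N y \<le> b \<Longrightarrow> N (x * y) \<le> a * b"
  using N_mult[of x y] N_nonneg[of x] N_nonneg[of y] by (meson mult_mono order_trans)

lemma N_sum_le:
  "(\<And>i. i \<in> A \<Longrightarrow> f i \<in> S) \<Longrightarrow> (\<And>i. i \<in> A \<Longrightarrow> N (f i) \<le> B) \<Longrightarrow> 0 \<le> B \<Longrightarrow> N (sum f A) \<le> B"
proof (induction A rule: infinite_finite_induct)
  case (insert x F)
  have "N (sum f (insert x F)) \<le> max (N (f x)) (N (sum f F))"
    using insert sum_mem[of F f] by (simp add: N_add)
  also have "\<dots> \<le> B"
    using insert by simp
  finally show ?case .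
qed (auto simp: N_0)

lemma N_power_le_1: "x \<in> S \<Longrightarrow> N x \<le> 1 \<Longrightarrow> N (x ^ n) \<le> 1"
  by (induction n) (use N_1 N_mult_le power_mem in fastforce)+

lemma N_1_plus_le_1: "w \<in> S \<Longrightarrow> N w \<le> 1 \<Longrightarrow> N (1 + w) \<le> 1"
  using N_add[of 1 w] one_mem N_1 by simp

lemma N_power_diff_le:
  assumes "x \<in> S" "y \<in> S" "N x \<le> 1" "N y \<le> 1"
  shows "N (x ^ n - y ^ n) \<le> N (x - y)"
proof (induction n)
  case 0
  then show ?case using N_0 N_nonneg diff_mem assms by simp
next
  case (Suc n)
  have "N (x * (x ^ n - y ^ n)) \<le> 1 * N (x - y)"
    using Suc assms by (intro N_mult_le) (auto intro: mem_rules)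
  moreover have "N ((x - y) * y ^ n) \<le> N (x - y) * 1"
    using N_power_le_1 assms by (intro N_mult_le) (auto intro: mem_rules)
  moreover have "N (x * (x ^ n - y ^ n) + (x - y) * y ^ n)
      \<le> max (N (x * (x ^ n - y ^ n))) (N ((x - y) * y ^ n))"
    using assms by (intro N_add) (simp_all add: mem_rules)
  moreover have "x ^ Suc n - y ^ Suc n = x * (x ^ n - y ^ n) + (x - y) * y ^ n"
    by (simp add: algebra_simps)
  ultimately show ?case
    by (simp del: power_Suc)
qed

lemma tendsto_N_unique:
  assumes "\<forall>n. s n \<in> S" "a \<in> S" "b \<in> S"
    and "(\<lambda>n. N (s n - a)) \<longlonglongrightarrow> 0" "(\<lambda>n. N (s n - b)) \<longlonglongrightarrow> 0"
  shows "a = b"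
proof -
  have "N (a - b) \<le> max (N (s n - a)) (N (s n - b))" for n
    using N_triangle[of a "s n" b] N_minus_commute[of a "s n"] assms by simp
  moreover have "(\<lambda>n. max (N (s n - a)) (N (s n - b))) \<longlonglongrightarrow> max 0 0"
    by (intro tendsto_max assms)
  ultimately have "N (a - b) \<le> 0"
    by (intro LIMSEQ_le_const) auto
  then show ?thesis
    using N_nonneg[of "a - b"] N_eq_0[of "a - b"] assms diff_mem by force
qed

lemma tendsto_N_le:
  assumes "\<forall>n. s n \<in> S" "a \<in> S" "(\<lambda>n. N (s n - a)) \<longlonglongrightarrow> 0" "\<forall>n. N (s n) \<le> B"
  shows "N a \<le> B"
proof -
  have "N a \<le> max (N (s n)) (N (s n - a))" for n
    using N_diff[of "s n" "s n - a"] assms diff_mem by simp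
  also have "\<dots> n \<le> max B (N (s n - a))" for n
    using assms by (intro max.mono) auto
  finally have "N a \<le> max B (N (s n - a))" for n .
  moreover have "(\<lambda>n. max B (N (s n - a))) \<longlonglongrightarrow> max B 0"
    by (intro tendsto_max tendsto_const assms)
  ultimately have "N a \<le> max B 0"
    by (intro LIMSEQ_le_const) auto
  moreover have "0 \<le> B"
    using assms N_nonneg by (meson order_trans)
  ultimately show ?thesis by simp
qed

lemma tendsto_N_add:
  assumes "\<forall>n. s n \<in> S" "\<forall>n. t n \<in> S" "a \<in> S" "b \<in> S"
    and "(\<lambda>n. N (s n - a)) \<longlonglongrightarrow> 0" "(\<lambda>n. N (t n - b)) \<longlonglongrightarrow> 0"
  shows "(\<lambda>n. N ((s n + t n) - (a + b))) \<longlonglongrightarrow> 0"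
proof (rule Lim_null_comparison[OF always_eventually])
  show "(\<lambda>n. max (N (s n - a)) (N (t n - b))) \<longlonglongrightarrow> 0"
    using tendsto_max[OF assms(5,6)] by simp
  show "\<forall>n. norm (N ((s n + t n) - (a + b))) \<le> max (N (s n - a)) (N (t n - b))"
    using N_add[of "s n - a" "t n - b" for n] N_nonneg assms
    by (simp add: mem_rules algebra_simps)
qed

lemma tendsto_N_diff:
  assumes "\<forall>n. s n \<in> S" "\<forall>n. t n \<in> S" "a \<in> S" "b \<in> S"
    and "(\<lambda>n. N (s n - a)) \<longlonglongrightarrow> 0" "(\<lambda>n. N (t n - b)) \<longlonglongrightarrow> 0"
  shows "(\<lambda>n. N ((s n - t n) - (a - b))) \<longlonglongrightarrow> 0"
proof -
  have "N (- t n - - b) = N (t n - b)" for n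
    using N_uminus[of "t n - b"] assms by (simp add: diff_mem)
  then show ?thesis
    using tendsto_N_add[of s "\<lambda>n. - t n" a "- b"] assms by (simp add: uminus_mem)
qed

lemma tendsto_N_close:
  assumes "\<forall>n. s n \<in> S" "\<forall>n. t n \<in> S" "a \<in> S"
    and "(\<lambda>n. N (s n - a)) \<longlonglongrightarrow> 0" "(\<lambda>n. N (s n - t n)) \<longlonglongrightarrow> 0"
  shows "(\<lambda>n. N (t n - a)) \<longlonglongrightarrow> 0"
  using tendsto_N_diff[of s "\<lambda>n. s n - t n" a 0] assms by (simp add: mem_rules)

lemma tendsto_N_diff_le:
  assumes "\<forall>n. s n \<in> S" "\<forall>n. t n \<in> S" "a \<in> S" "b \<in> S"
    and "(\<lambda>n. N (s n - a)) \<longlonglongrightarrow> 0" "(\<lambda>n. N (t n - b)) \<longlonglongrightarrow> 0"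
    and "\<forall>n. N (s n - t n) \<le> B"
  shows "N (a - b) \<le> B"
  using tendsto_N_le[OF _ _ tendsto_N_diff[OF assms(1-6)]] assms by (simp add: diff_mem)

text \<open>Only true because \<open>N\<close> is ultrametric: \<open>N (s m - s M)\<close> is bounded by the largest
  step between \<open>M\<close> and \<open>m\<close>.\<close>
lemma convergent_if_steps_tendsto_0:
  assumes s: "\<forall>n. s n \<in> S" and steps: "(\<lambda>k. N (s (Suc k) - s k)) \<longlonglongrightarrow> 0"
  shows "\<exists>l\<in>S. (\<lambda>n. N (s n - l)) \<longlonglongrightarrow> 0"
proof (rule Cauchy_convergent[OF s], intro allI impI)
  fix e :: real assume "e > 0"
  then obtain M where M: "\<forall>k\<ge>M. N (s (Suc k) - s k) < e"
    using order_tendstoD(2)[OF steps] by (auto simp: eventually_sequentially)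
  have far: "N (s (M + j) - s M) < e" for j
  proof (induction j)
    case (Suc j)
    have "N (s (M + Suc j) - s M) \<le> max (N (s (Suc (M + j)) - s (M + j))) (N (s (M + j) - s M))"
      using N_triangle s by simp
    moreover have "N (s (Suc (M + j)) - s (M + j)) < e"
      using M by simp
    ultimately show ?case using Suc by simp
  qed (use N_0 \<open>e > 0\<close> in simp)
  have "N (s m - s n) < e" if "m \<ge> M" "n \<ge> M" for m n
  proof -
    have "N (s m - s n) \<le> max (N (s m - s M)) (N (s M - s n))"
      using N_triangle s by simp
    moreover have "N (s m - s M) < e" "N (s M - s n) < e"
      using far[of "m - M"] far[of "n - M"] N_minus_commute s that by simp_all
    ultimately show ?thesis by simp
  qed
  then show "\<exists>M. \<forall>m\<ge>M. \<forall>n\<ge>M. N (s m - s n) < e" by blast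
qed

definition Nlim :: "(nat \<Rightarrow> 'r) \<Rightarrow> 'r" where
  "Nlim s = (THE l. l \<in> S \<and> (\<lambda>n. N (s n - l)) \<longlonglongrightarrow> 0)"

lemma Nlim_eqI:
  assumes "\<forall>n. s n \<in> S" "l \<in> S" "(\<lambda>n. N (s n - l)) \<longlonglongrightarrow> 0"
  shows "Nlim s = l"
  unfolding Nlim_def using assms tendsto_N_unique[OF assms(1)] by blast

lemma Nlim_tendsto:
  assumes "\<forall>n. s n \<in> S" "\<exists>l\<in>S. (\<lambda>n. N (s n - l)) \<longlonglongrightarrow> 0"
  shows "Nlim s \<in> S" "(\<lambda>n. N (s n - Nlim s)) \<longlonglongrightarrow> 0"
  using assms Nlim_eqI by auto

definition pseries :: "(nat \<Rightarrow> 'r) \<Rightarrow> 'r \<Rightarrow> 'r" where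
  "pseries c x = Nlim (\<lambda>n. \<Sum>i<n. c i * x ^ i)"

lemma pseries_sums:
  assumes "\<forall>i. c i \<in> S" "x \<in> S" "(\<lambda>i. N (c i * x ^ i)) \<longlonglongrightarrow> 0"
  shows "pseries c x \<in> S" "(\<lambda>n. N ((\<Sum>i<n. c i * x ^ i) - pseries c x)) \<longlonglongrightarrow> 0"
proof -
  have "\<exists>l\<in>S. (\<lambda>n. N ((\<Sum>i<n. c i * x ^ i) - l)) \<longlonglongrightarrow> 0"
    using assms by (intro convergent_if_steps_tendsto_0) (simp_all add: mem_rules)
  then show "pseries c x \<in> S" "(\<lambda>n. N ((\<Sum>i<n. c i * x ^ i) - pseries c x)) \<longlonglongrightarrow> 0"
    unfolding pseries_def using assms by (auto intro!: Nlim_tendsto simp: mem_rules)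
qed

lemma pseries_eqI:
  assumes "\<forall>i. c i \<in> S" "x \<in> S" "v \<in> S" "(\<lambda>n. N ((\<Sum>i<n. c i * x ^ i) - v)) \<longlonglongrightarrow> 0"
  shows "pseries c x = v"
  unfolding pseries_def using assms by (intro Nlim_eqI) (simp_all add: mem_rules)

lemma pseries_sums_unit_ball:
  assumes "\<forall>i. c i \<in> S" "(\<lambda>i. N (c i)) \<longlonglongrightarrow> 0" "x \<in> S" "N x \<le> 1"
  shows "pseries c x \<in> S" "(\<lambda>n. N ((\<Sum>i<n. c i * x ^ i) - pseries c x)) \<longlonglongrightarrow> 0"
proof -
  have "N (c i * x ^ i) \<le> N (c i) * 1" for i
    using assms N_power_le_1 by (intro N_mult_le) (simp_all add: mem_rules)
  then have "(\<lambda>i. N (c i * x ^ i)) \<longlonglongrightarrow> 0"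
    using assms N_nonneg
    by (intro Lim_null_comparison[OF always_eventually assms(2)]) (simp add: mem_rules)
  then show "pseries c x \<in> S" "(\<lambda>n. N ((\<Sum>i<n. c i * x ^ i) - pseries c x)) \<longlonglongrightarrow> 0"
    using pseries_sums assms by blast+
qed

lemma pseries_sums_open_unit_ball:
  assumes "\<forall>i. c i \<in> S" "\<forall>i. N (c i) \<le> B" "x \<in> S" "N x < 1"
  shows "pseries c x \<in> S" "(\<lambda>n. N ((\<Sum>i<n. c i * x ^ i) - pseries c x)) \<longlonglongrightarrow> 0"
proof -
  have "N (c i * x ^ i) \<le> B * N x ^ i" for i
  proof -
    have "N (x ^ i) \<le> N x ^ i"
    proof (induction i)
      case (Suc i)
      have "N (x ^ Suc i) \<le> N x * N (x ^ i)"
        using N_mult assms power_mem by simp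
      also have "\<dots> \<le> N x * N x ^ i"
        using Suc assms N_nonneg by (intro mult_left_mono) auto
      finally show ?case by simp
    qed (use N_1 in simp)
    then show ?thesis using assms by (intro N_mult_le) (simp_all add: mem_rules)
  qed
  moreover have lim: "(\<lambda>i. B * N x ^ i) \<longlonglongrightarrow> 0"
    using assms N_nonneg by (intro tendsto_mult_right_zero LIMSEQ_power_zero) auto
  ultimately have "(\<lambda>i. N (c i * x ^ i)) \<longlonglongrightarrow> 0"
    using assms N_nonneg
    by (intro Lim_null_comparison[OF always_eventually lim]) (simp add: mem_rules)
  then show "pseries c x \<in> S" "(\<lambda>n. N ((\<Sum>i<n. c i * x ^ i) - pseries c x)) \<longlonglongrightarrow> 0"
    using pseries_sums assms by blast+
qed

lemma N_partial_sum_le: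
  assumes "\<forall>i. c i \<in> S" "\<forall>i. N (c i) \<le> B" "0 \<le> B" "x \<in> S" "N x \<le> 1"
  shows "N (\<Sum>i<n. c i * x ^ i) \<le> B"
proof (rule N_sum_le)
  show "N (c i * x ^ i) \<le> B" for i
    using assms N_power_le_1 N_mult_le[of "c i" "x ^ i" B 1] by (simp add: mem_rules)
qed (use assms in \<open>simp_all add: mem_rules\<close>)

lemma N_pseries_le:
  assumes "\<forall>i. c i \<in> S" "\<forall>i. N (c i) \<le> B" "0 \<le> B" "x \<in> S" "N x \<le> 1"
    and "(\<lambda>n. N ((\<Sum>i<n. c i * x ^ i) - pseries c x)) \<longlonglongrightarrow> 0" "pseries c x \<in> S"
  shows "N (pseries c x) \<le> B"
  using tendsto_N_le[OF _ assms(7,6)] N_partial_sum_le[OF assms(1-5)] assms by (simp add: mem_rules)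

lemma pseries_lipschitz:
  assumes "\<forall>i. c i \<in> S" "\<forall>i. N (c i) \<le> M" "0 \<le> M" "(\<lambda>i. N (c i)) \<longlonglongrightarrow> 0"
    and "x \<in> S" "N x \<le> 1" "y \<in> S" "N y \<le> 1"
  shows "N (pseries c x - pseries c y) \<le> M * N (x - y)"
proof (rule tendsto_N_diff_le)
  show "\<forall>n. N ((\<Sum>i<n. c i * x ^ i) - (\<Sum>i<n. c i * y ^ i)) \<le> M * N (x - y)"
  proof
    fix n
    have "N (c i * (x ^ i - y ^ i)) \<le> M * N (x - y)" for i
      using assms N_power_diff_le by (intro N_mult_le) (simp_all add: mem_rules)
    then have "N (\<Sum>i<n. c i * (x ^ i - y ^ i)) \<le> M * N (x - y)"
      using assms N_nonneg by (intro N_sum_le) (simp_all add: mem_rules)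
    then show "N ((\<Sum>i<n. c i * x ^ i) - (\<Sum>i<n. c i * y ^ i)) \<le> M * N (x - y)"
      by (simp add: sum_subtractf right_diff_distrib)
  qed
qed (use pseries_sums_unit_ball assms in \<open>simp_all add: mem_rules\<close>)

lemma contraction_iterates_converge:
  assumes maps: "\<And>w. w \<in> S \<Longrightarrow> N w \<le> r \<Longrightarrow> T w \<in> S \<and> N (T w) \<le> r"
    and contr: "\<And>w w'. w \<in> S \<Longrightarrow> N w \<le> r \<Longrightarrow> w' \<in> S \<Longrightarrow> N w' \<le> r \<Longrightarrow>
        N (T w - T w') \<le> \<theta> * N (w - w')"
    and \<theta>: "0 \<le> \<theta>" "\<theta> < 1" and r: "0 \<le> r"
  shows "\<exists>l\<in>S. N l \<le> r \<and> (\<lambda>k. N ((T ^^ k) 0 - l)) \<longlonglongrightarrow> 0"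
proof -
  define s where "s k = (T ^^ k) 0" for k
  have s: "s k \<in> S \<and> N (s k) \<le> r" for k
    by (induction k) (auto simp: s_def zero_mem N_0 r maps)
  have step: "N (s (Suc k) - s k) \<le> \<theta> ^ k * r" for k
  proof (induction k)
    case 0
    show ?case using s[of 1] by (simp add: s_def)
  next
    case (Suc k)
    have "s (Suc j) = T (s j)" for j
      by (simp add: s_def)
    then have "N (s (Suc (Suc k)) - s (Suc k)) \<le> \<theta> * N (s (Suc k) - s k)"
      using contr s by metis
    also have "\<dots> \<le> \<theta> * (\<theta> ^ k * r)"
      using Suc \<theta> by (intro mult_left_mono) auto
    finally show ?case by simp
  qed
  have lim: "(\<lambda>k. \<theta> ^ k * r) \<longlonglongrightarrow> 0"
    using \<theta> by (intro tendsto_mult_left_zero LIMSEQ_power_zero) auto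
  have "(\<lambda>k. N (s (Suc k) - s k)) \<longlonglongrightarrow> 0"
    using step s N_nonneg
    by (intro Lim_null_comparison[OF always_eventually lim]) (simp add: diff_mem)
  then obtain l where l: "l \<in> S" "(\<lambda>n. N (s n - l)) \<longlonglongrightarrow> 0"
    using convergent_if_steps_tendsto_0 s by blast
  moreover have "N l \<le> r"
    using tendsto_N_le[OF _ l(1,2)] s by blast
  ultimately show ?thesis
    unfolding s_def by blast
qed

lemma contraction_fixed_point:
  assumes maps: "\<And>w. w \<in> S \<Longrightarrow> N w \<le> r \<Longrightarrow> T w \<in> S \<and> N (T w) \<le> r"
    and contr: "\<And>w w'. w \<in> S \<Longrightarrow> N w \<le> r \<Longrightarrow> w' \<in> S \<Longrightarrow> N w' \<le> r \<Longrightarrow>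
        N (T w - T w') \<le> \<theta> * N (w - w')"
    and \<theta>: "0 \<le> \<theta>" "\<theta> < 1" and r: "0 \<le> r"
  shows "\<exists>w\<in>S. N w \<le> r \<and> T w = w"
proof -
  define s where "s k = (T ^^ k) 0" for k
  have s: "s k \<in> S \<and> N (s k) \<le> r" for k
    by (induction k) (auto simp: s_def zero_mem N_0 r maps)
  obtain l where l: "l \<in> S" "N l \<le> r" "(\<lambda>n. N (s n - l)) \<longlonglongrightarrow> 0"
    using contraction_iterates_converge[OF maps contr \<theta> r] unfolding s_def by blast
  have "N (s (Suc n) - T l) \<le> \<theta> * N (s n - l)" for n
    using contr s l by (simp add: s_def)
  then have "(\<lambda>n. N (s (Suc n) - T l)) \<longlonglongrightarrow> 0"
    using s l maps N_nonneg
    by (intro Lim_null_comparison[OF always_eventually tendsto_mult_right_zero[OF l(3), where c=\<theta>]])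
      (simp add: diff_mem)
  moreover have "(\<lambda>n. N (s (Suc n) - l)) \<longlonglongrightarrow> 0"
    using LIMSEQ_Suc[OF l(3)] .
  ultimately have "T l = l"
    using tendsto_N_unique[of "\<lambda>n. s (Suc n)"] s l maps by blast
  then show ?thesis
    using l by blast
qed

end

section \<open>The fixed-point map\<close>

text \<open>This form of the equation \<open>P\<^sub>\<lambda>(z) + F(z) = z\<close> (with \<open>z = 1 + w\<close>, \<open>L = 1 / \<lambda>\<close>) is a
  contraction near \<open>w = 0\<close>: the terms \<open>w - z ^ p * w\<close> nearly cancel, and the rest carries the
  factor \<open>p\<close>.\<close>
definition fix_map :: "nat \<Rightarrow> 'r::comm_ring_1 \<Rightarrow> ('r \<Rightarrow> 'r) \<Rightarrow> 'r \<Rightarrow> 'r" where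
  "fix_map p L F w =
     w - (1 + w) ^ p * w + of_nat p * (L * ((1 + w) ^ (p + 1) - (1 + w) + F (1 + w)))"

lemma fix_map_eq_iff:
  fixes F :: "'a::field_char_0 \<Rightarrow> 'a"
  assumes "p > 0" "lam \<noteq> 0"
  shows "fix_map p (1 / lam) F w = w \<longleftrightarrow> Pfam p lam (1 + w) + F (1 + w) = 1 + w"
proof -
  have "fix_map p (1 / lam) F w - w = (of_nat p / lam) * (Pfam p lam (1 + w) + F (1 + w) - (1 + w))"
    using assms by (simp add: fix_map_def Pfam_def field_simps)
  then show ?thesis
    using assms by (metis divide_eq_0_iff eq_iff_diff_eq_0 mult_eq_0_iff of_nat_eq_0_iff not_gr0)
qed

locale ultrametric_banach_ring_p = ultrametric_banach_ring +
  fixes p :: nat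
  assumes p_gt_1: "1 < p"
    and N_of_nat_p_mult: "x \<in> S \<Longrightarrow> N (of_nat p * x) \<le> N x / p"
begin

lemma fix_map_mem: "L \<in> S \<Longrightarrow> w \<in> S \<Longrightarrow> F (1 + w) \<in> S \<Longrightarrow> fix_map p L F w \<in> S"
  unfolding fix_map_def by (simp add: mem_rules)

lemma N_of_nat_p_mult_le:
  assumes "L \<in> S" "N L \<le> 1" "x \<in> S" "N x \<le> B"
  shows "N (of_nat p * (L * x)) \<le> B / p"
proof -
  have "N (of_nat p * (L * x)) \<le> N (L * x) / p"
    using assms by (simp add: N_of_nat_p_mult mem_rules)
  also have "\<dots> \<le> (1 * B) / p"
    using assms by (intro divide_right_mono N_mult_le) auto
  finally show ?thesis by simp
qed

lemma N_fix_map_diff_le: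
  assumes L: "L \<in> S" "N L \<le> 1" and r: "r \<le> 1"
    and w: "w \<in> S" "N w \<le> r" and w': "w' \<in> S" "N w' \<le> r"
    and F: "F (1 + w) \<in> S" "F (1 + w') \<in> S" "N (F (1 + w) - F (1 + w')) \<le> N (w - w')"
  shows "N (fix_map p L F w - fix_map p L F w') \<le> max r (1 / p) * N (w - w')"
proof -
  define z z' d where "z = 1 + w" and "z' = 1 + w'" and "d = N (w - w')"
  let ?A = "(w - w') * (1 - z ^ p) + w' * (z' ^ p - z ^ p)"
  let ?B = "of_nat p * (L * ((z ^ (p + 1) - z' ^ (p + 1)) - (w - w') + (F z - F z')))"
  have z: "z \<in> S" "z' \<in> S" "N z \<le> 1" "N z' \<le> 1"
    using w w' r N_1_plus_le_1 unfolding z_def z'_def by (simp_all add: mem_rules)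
  have d: "0 \<le> d" "w - w' \<in> S"
    unfolding d_def using w w' N_nonneg by (simp_all add: mem_rules)
  have "N ((w - w') * (1 - z ^ p)) \<le> d * r"
  proof (rule N_mult_le)
    show "N (1 - z ^ p) \<le> r"
      using N_power_diff_le[of 1 z p] z w N_1 one_mem N_uminus by (simp add: z_def)
  qed (use z d in \<open>simp_all add: d_def mem_rules\<close>)
  moreover have "N (w' * (z' ^ p - z ^ p)) \<le> r * d"
  proof (rule N_mult_le)
    show "N (z' ^ p - z ^ p) \<le> d"
      using N_power_diff_le[of z' z p] z by (simp add: z_def z'_def d_def N_minus_commute w w')
  qed (use z w' in \<open>simp_all add: mem_rules\<close>)
  ultimately have A: "N ?A \<le> r * d"
    using z d w' by (intro N_add_le) (simp_all add: mem_rules mult.commute)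
  have "N (z ^ (p + 1) - z' ^ (p + 1)) \<le> d" "N (F z - F z') \<le> d"
    using N_power_diff_le[of z z' "p + 1"] z F by (simp_all add: z_def z'_def d_def del: power_Suc)
  then have "N ((z ^ (p + 1) - z' ^ (p + 1)) - (w - w') + (F z - F z')) \<le> d"
    using z d F by (simp add: N_add_le N_diff_le mem_rules z_def z'_def d_def)
  then have B: "N ?B \<le> d / p"
    using L z d F unfolding z_def z'_def by (intro N_of_nat_p_mult_le) (simp_all add: mem_rules)
  have "fix_map p L F w - fix_map p L F w' = ?A + ?B"
    unfolding fix_map_def z_def z'_def by (simp add: algebra_simps)
  also have "N (?A + ?B) \<le> max (N ?A) (N ?B)"
    using z d w' L F unfolding z_def z'_def by (intro N_add) (simp_all add: mem_rules)
  also have "\<dots> \<le> max (r * d) (d / p)"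
    using A B by (rule max.mono)
  also have "\<dots> = max r (1 / p) * d"
    using d by (simp add: max_mult_distrib_right)
  finally show ?thesis
    by (simp add: d_def)
qed

lemma fix_map_has_fixed_point:
  assumes L: "L \<in> S" "N L \<le> 1" and r: "0 \<le> r" "r < 1"
    and F_mem: "\<And>w. w \<in> S \<Longrightarrow> N w \<le> r \<Longrightarrow> F (1 + w) \<in> S"
    and F_lip: "\<And>w w'. w \<in> S \<Longrightarrow> N w \<le> r \<Longrightarrow> w' \<in> S \<Longrightarrow> N w' \<le> r \<Longrightarrow>
        N (F (1 + w) - F (1 + w')) \<le> N (w - w')"
    and F_1: "N (F 1) \<le> real p * r"
  shows "\<exists>w\<in>S. N w \<le> r \<and> fix_map p L F w = w"
proof (rule contraction_fixed_point)
  define \<theta> where "\<theta> = max r (1 / p)"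
  show \<theta>: "0 \<le> \<theta>" "\<theta> < 1"
    using r p_gt_1 by (auto simp: \<theta>_def)
  show contr: "N (fix_map p L F w - fix_map p L F w') \<le> \<theta> * N (w - w')"
    if "w \<in> S" "N w \<le> r" "w' \<in> S" "N w' \<le> r" for w w'
    unfolding \<theta>_def using that L r F_mem F_lip by (intro N_fix_map_diff_le) auto
  show "fix_map p L F w \<in> S \<and> N (fix_map p L F w) \<le> r" if w: "w \<in> S" "N w \<le> r" for w
  proof
    have F1: "F 1 \<in> S"
      using F_mem[of 0] zero_mem N_0 r by simp
    have "fix_map p L F 0 = of_nat p * (L * F 1)"
      by (simp add: fix_map_def)
    then have "N (fix_map p L F 0) \<le> r"
      using N_of_nat_p_mult_le[OF L F1 F_1] p_gt_1 by simp
    moreover have "N (fix_map p L F w - fix_map p L F 0) \<le> r"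
    proof -
      have "N (fix_map p L F w - fix_map p L F 0) \<le> \<theta> * N w"
        using contr[of w 0] w zero_mem N_0 r by simp
      also have "\<dots> \<le> N w"
        using \<theta> N_nonneg[OF w(1)] by (simp add: mult_left_le_one_le)
      finally show ?thesis
        using w by simp
    qed
    moreover have "fix_map p L F 0 \<in> S"
      using fix_map_mem L F1 zero_mem by simp
    ultimately show "N (fix_map p L F w) \<le> r"
      using N_add_le[of "fix_map p L F w - fix_map p L F 0" "fix_map p L F 0" r] w L F_mem
      by (simp add: fix_map_mem diff_mem)
    show "fix_map p L F w \<in> S"
      using fix_map_mem L F_mem w by blast
  qed
qed (use r in simp)

lemma fix_map_fixed_point_unique:
  assumes L: "L \<in> S" "N L \<le> 1" and r: "r < 1"
    and F_mem: "\<And>w. w \<in> S \<Longrightarrow> N w \<le> r \<Longrightarrow> F (1 + w) \<in> S"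
    and F_lip: "\<And>w w'. w \<in> S \<Longrightarrow> N w \<le> r \<Longrightarrow> w' \<in> S \<Longrightarrow> N w' \<le> r \<Longrightarrow>
        N (F (1 + w) - F (1 + w')) \<le> N (w - w')"
    and w: "w \<in> S" "N w \<le> r" "fix_map p L F w = w"
    and w': "w' \<in> S" "N w' \<le> r" "fix_map p L F w' = w'"
  shows "w = w'"
proof -
  have "N (w - w') \<le> max r (1 / p) * N (w - w')"
    using N_fix_map_diff_le[of L r w w' F] assms by simp
  moreover have "max r (1 / p) < 1"
    using r p_gt_1 by simp
  ultimately have "N (w - w') \<le> 0"
    by (simp add: mult_le_cancel_right1)
  then show ?thesis
    using N_nonneg[of "w - w'"] N_eq_0[of "w - w'"] w w' diff_mem by simp
qed

end

section \<open>The field \<open>\<complex>\<^sub>p\<close> and power series with bounded coefficients\<close>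

locale Cp_field =
  fixes p :: nat and av :: "'a::field_char_0 \<Rightarrow> real"
  assumes is_Cp: "is_Cp p av"
begin

lemma p_gt_1: "1 < p"
  using is_Cp prime_gt_1_nat by (simp add: is_Cp_def)

lemma av_nonneg: "0 \<le> av x"
  and av_eq_0_iff: "av x = 0 \<longleftrightarrow> x = 0"
  and av_mult: "av (x * y) = av x * av y"
  and av_add: "av (x + y) \<le> max (av x) (av y)"
  and av_of_nat_p: "av (of_nat p) = 1 / p"
  using is_Cp by (simp_all add: is_Cp_def)

lemma av_Cauchy_convergent:
  "(\<forall>e>0. \<exists>M. \<forall>m\<ge>M. \<forall>n\<ge>M. av (s m - s n) < e) \<Longrightarrow> \<exists>l. (\<lambda>n. av (s n - l)) \<longlonglongrightarrow> 0"
  using is_Cp unfolding is_Cp_def by blast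

lemma av_0 [simp]: "av 0 = 0"
  using av_eq_0_iff by simp

lemma av_1 [simp]: "av 1 = 1"
  using av_mult[of 1 1] av_eq_0_iff[of 1] by simp

lemma av_uminus [simp]: "av (- x) = av x"
proof -
  have "av (- 1) ^ 2 = 1"
    using av_mult[of "- 1" "- 1"] by (simp add: power2_eq_square)
  then have "av (- 1) = 1"
    using av_nonneg[of "- 1"] power2_eq_1_iff by force
  then show ?thesis
    using av_mult[of "- 1" x] by simp
qed

lemma av_power: "av (x ^ n) = av x ^ n"
  by (induction n) (auto simp: av_mult)

lemma av_divide: "av (x / y) = av x / av y"
proof (cases "y = 0")
  case False
  then have "av (x / y) * av y = av x" "av y \<noteq> 0"
    using av_mult[of "x / y" y] av_eq_0_iff by simp_all
  then show ?thesis
    by (simp add: field_simps)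
qed simp

lemma av_add_eq_right:
  assumes "av x < av y"
  shows "av (x + y) = av y"
proof -
  have "av (x + y) \<le> av y" "av y \<le> max (av (x + y)) (av x)"
    using av_add[of x y] av_add[of "x + y" "- x"] assms by simp_all
  then show ?thesis
    using assms by linarith
qed

lemma av_eq_1_if_near_1: "av (lam - 1) < 1 \<Longrightarrow> av lam = 1"
  using av_add_eq_right[of "lam - 1" 1] by simp

sublocale C: ultrametric_banach_ring_p UNIV av p
proof unfold_locales
  show "av (of_nat p * x) \<le> av x / real p" for x
    using av_mult av_of_nat_p by simp
qed (use p_gt_1 av_Cauchy_convergent in \<open>auto simp: av_nonneg av_eq_0_iff av_add av_mult\<close>)

end

definition coeff_norm :: "('a::field \<Rightarrow> real) \<Rightarrow> 'a fps \<Rightarrow> real" where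
  "coeff_norm av A = (SUP n. av (A $ n))"

definition bounded_coeffs :: "('a::field \<Rightarrow> real) \<Rightarrow> 'a fps \<Rightarrow> bool" where
  "bounded_coeffs av A \<longleftrightarrow> bdd_above (range (\<lambda>n. av (A $ n)))"

context Cp_field
begin

lemma av_coeff_le_coeff_norm: "bounded_coeffs av A \<Longrightarrow> av (A $ n) \<le> coeff_norm av A"
  unfolding coeff_norm_def bounded_coeffs_def by (rule cSUP_upper) auto

lemma coeff_norm_le: "(\<And>n. av (A $ n) \<le> B) \<Longrightarrow> coeff_norm av A \<le> B"
  unfolding coeff_norm_def by (rule cSUP_least) auto

lemma bounded_coeffsI: "(\<And>n. av (A $ n) \<le> B) \<Longrightarrow> bounded_coeffs av A"
  unfolding bounded_coeffs_def by (rule bdd_aboveI2) auto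

lemma coeff_norm_nonneg: "bounded_coeffs av A \<Longrightarrow> 0 \<le> coeff_norm av A"
  using av_coeff_le_coeff_norm[of A 0] av_nonneg[of "A $ 0"] by linarith

lemma coeff_norm_fps_const [simp]: "coeff_norm av (fps_const c) = av c"
proof (rule antisym)
  show "coeff_norm av (fps_const c) \<le> av c"
    by (rule coeff_norm_le) (auto simp: av_nonneg)
  show "av c \<le> coeff_norm av (fps_const c)"
    using av_coeff_le_coeff_norm[of "fps_const c" 0] bounded_coeffsI[of "fps_const c" "av c"]
    by (simp add: av_nonneg)
qed

lemma bounded_coeffs_fps_const: "bounded_coeffs av (fps_const c)"
  by (rule bounded_coeffsI[of _ "av c"]) (simp add: av_nonneg)

lemma bounded_coeffs_add:
  assumes "bounded_coeffs av A" "bounded_coeffs av B"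
  shows "bounded_coeffs av (A + B)"
    "coeff_norm av (A + B) \<le> max (coeff_norm av A) (coeff_norm av B)"
proof -
  have "av ((A + B) $ n) \<le> max (coeff_norm av A) (coeff_norm av B)" for n
    using av_add[of "A $ n" "B $ n"] av_coeff_le_coeff_norm[OF assms(1), of n]
      av_coeff_le_coeff_norm[OF assms(2), of n] by auto
  then show "bounded_coeffs av (A + B)"
    "coeff_norm av (A + B) \<le> max (coeff_norm av A) (coeff_norm av B)"
    using bounded_coeffsI coeff_norm_le by blast+
qed

lemma bounded_coeffs_mult:
  assumes "bounded_coeffs av A" "bounded_coeffs av B"
  shows "bounded_coeffs av (A * B)" "coeff_norm av (A * B) \<le> coeff_norm av A * coeff_norm av B"
proof -
  have "av ((A * B) $ n) \<le> coeff_norm av A * coeff_norm av B" for n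
    unfolding fps_mult_nth
  proof (rule C.N_sum_le)
    show "av (A $ i * B $ (n - i)) \<le> coeff_norm av A * coeff_norm av B" for i
      unfolding av_mult using assms av_coeff_le_coeff_norm av_nonneg coeff_norm_nonneg
      by (intro mult_mono) auto
  qed (use assms coeff_norm_nonneg in \<open>auto intro: mult_nonneg_nonneg\<close>)
  then show "bounded_coeffs av (A * B)" "coeff_norm av (A * B) \<le> coeff_norm av A * coeff_norm av B"
    using bounded_coeffsI coeff_norm_le by blast+
qed

lemma bounded_coeffs_diff:
  "bounded_coeffs av A \<Longrightarrow> bounded_coeffs av B \<Longrightarrow> bounded_coeffs av (A - B)"
  using bounded_coeffs_add(1)[of A "- B"] by (simp add: bounded_coeffs_def)

lemma coeffwise_limit_uniform:
  assumes s: "\<forall>n. bounded_coeffs av (s n)"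
    and Cauchy: "\<forall>e>0. \<exists>M. \<forall>m\<ge>M. \<forall>n\<ge>M. coeff_norm av (s m - s n) < e"
    and c: "\<And>n. (\<lambda>k. av (s k $ n - c n)) \<longlonglongrightarrow> 0" and "e > 0"
  shows "\<exists>K. \<forall>m\<ge>K. \<forall>n. av (s m $ n - c n) \<le> e"
proof -
  obtain K where K: "\<forall>m\<ge>K. \<forall>k\<ge>K. coeff_norm av (s m - s k) < e"
    using Cauchy \<open>e > 0\<close> by blast
  have "av (s m $ n - c n) \<le> e" if "m \<ge> K" for m n
  proof (rule C.tendsto_N_le)
    show "(\<lambda>k. av ((s m $ n - s (k + K) $ n) - (s m $ n - c n))) \<longlonglongrightarrow> 0"
      using LIMSEQ_ignore_initial_segment[OF c[of n], of K] by (simp add: C.N_minus_commute)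
    have "av (s m $ n - s k $ n) \<le> coeff_norm av (s m - s k)" for k
      using s av_coeff_le_coeff_norm[of "s m - s k" n] bounded_coeffs_diff by simp
    then show "\<forall>k. av (s m $ n - s (k + K) $ n) \<le> e"
      using K that by (meson le_add2 less_imp_le order_trans)
  qed auto
  then show ?thesis by blast
qed

text \<open>The coefficientwise limits exist in \<open>\<complex>\<^sub>p\<close>, and the convergence is uniform in the
  coefficient index.\<close>
lemma bounded_coeffs_Cauchy_convergent:
  assumes s: "\<forall>n. bounded_coeffs av (s n)"
    and Cauchy: "\<forall>e>0. \<exists>M. \<forall>m\<ge>M. \<forall>n\<ge>M. coeff_norm av (s m - s n) < e"
  shows "\<exists>l. bounded_coeffs av l \<and> (\<lambda>n. coeff_norm av (s n - l)) \<longlonglongrightarrow> 0"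
proof -
  have "av (s m $ n - s k $ n) \<le> coeff_norm av (s m - s k)" for m k n
    using s av_coeff_le_coeff_norm[of "s m - s k" n] bounded_coeffs_diff by simp
  then have "\<exists>l. (\<lambda>k. av (s k $ n - l)) \<longlonglongrightarrow> 0" for n
    using Cauchy by (intro av_Cauchy_convergent) (meson le_less_trans)
  then obtain c where c: "\<And>n. (\<lambda>k. av (s k $ n - c n)) \<longlonglongrightarrow> 0"
    by metis
  note uniform = coeffwise_limit_uniform[OF s Cauchy c]
  define l where "l = Abs_fps c"
  obtain K1 where K1: "\<forall>m\<ge>K1. \<forall>n. av (s m $ n - l $ n) \<le> 1"
    using uniform[of 1] by (auto simp: l_def)
  have "av (l $ n) \<le> max (coeff_norm av (s K1)) 1" for n
  proof -
    have "av (l $ n) \<le> max (av (s K1 $ n)) (av (s K1 $ n - l $ n))"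
      using C.N_diff[of "s K1 $ n" "s K1 $ n - l $ n"] by simp
    also have "\<dots> \<le> max (coeff_norm av (s K1)) 1"
      using av_coeff_le_coeff_norm[of "s K1" n] s K1 by (intro max.mono) auto
    finally show ?thesis .
  qed
  then have l: "bounded_coeffs av l"
    by (rule bounded_coeffsI)
  have "(\<lambda>m. coeff_norm av (s m - l)) \<longlonglongrightarrow> 0"
  proof (rule LIMSEQ_I)
    fix e :: real assume "e > 0"
    then obtain K where K: "\<forall>m\<ge>K. \<forall>n. av (s m $ n - l $ n) \<le> e / 2"
      using uniform[of "e / 2"] by (auto simp: l_def)
    have "coeff_norm av (s m - l) \<le> e / 2" if "m \<ge> K" for m
      using K that by (intro coeff_norm_le) simp
    moreover have "0 \<le> coeff_norm av (s m - l)" for m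
      using s l bounded_coeffs_diff by (intro coeff_norm_nonneg) simp
    ultimately have "\<forall>m\<ge>K. norm (coeff_norm av (s m - l) - 0) < e"
      using \<open>e > 0\<close> by fastforce
    then show "\<exists>K. \<forall>m\<ge>K. norm (coeff_norm av (s m - l) - 0) < e"
      by blast
  qed
  then show ?thesis
    using l by blast
qed

sublocale F: ultrametric_banach_ring_p "{A. bounded_coeffs av A}" "coeff_norm av" p
proof unfold_locales
  show "0 \<in> {A. bounded_coeffs av A}" "1 \<in> {A. bounded_coeffs av A}" "coeff_norm av 1 \<le> 1"
    using bounded_coeffs_fps_const[of 0] bounded_coeffs_fps_const[of 1] coeff_norm_fps_const[of 1]
    by (simp_all flip: fps_const_1_eq_1)
  show "coeff_norm av 0 = 0"
    using coeff_norm_fps_const[of 0] by simp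
  show "1 < p"
    by (rule p_gt_1)
  fix x y
  assume x: "x \<in> {A. bounded_coeffs av A}"
  then show "- x \<in> {A. bounded_coeffs av A}" "coeff_norm av (- x) = coeff_norm av x"
    by (simp_all add: bounded_coeffs_def coeff_norm_def)
  show "0 \<le> coeff_norm av x"
    using coeff_norm_nonneg x by simp
  show "x = 0" if "coeff_norm av x = 0"
  proof (rule fps_ext)
    show "x $ n = 0 $ n" for n
      using av_coeff_le_coeff_norm[of x n] av_nonneg[of "x $ n"] av_eq_0_iff x that by simp
  qed
  show "coeff_norm av (of_nat p * x) \<le> coeff_norm av x / p"
  proof (rule coeff_norm_le)
    show "av ((of_nat p * x) $ n) \<le> coeff_norm av x / p" for n
      using av_coeff_le_coeff_norm[of x n] x p_gt_1
      by (simp add: av_mult av_of_nat_p divide_right_mono flip: fps_of_nat)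
  qed
  assume y: "y \<in> {A. bounded_coeffs av A}"
  then show "x + y \<in> {A. bounded_coeffs av A}" "x * y \<in> {A. bounded_coeffs av A}"
    "coeff_norm av (x + y) \<le> max (coeff_norm av x) (coeff_norm av y)"
    "coeff_norm av (x * y) \<le> coeff_norm av x * coeff_norm av y"
    using x bounded_coeffs_add bounded_coeffs_mult by simp_all
next
  show "\<exists>l\<in>{A. bounded_coeffs av A}. (\<lambda>n. coeff_norm av (s n - l)) \<longlonglongrightarrow> 0"
    if "\<forall>n. s n \<in> {A. bounded_coeffs av A}"
      "\<forall>e>0. \<exists>M. \<forall>m\<ge>M. \<forall>n\<ge>M. coeff_norm av (s m - s n) < e" for s
    using bounded_coeffs_Cauchy_convergent that by simp
qed

lemma bounded_coeffs_closed [simp]: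
  "bounded_coeffs av A \<Longrightarrow> bounded_coeffs av B \<Longrightarrow> bounded_coeffs av (A + B)"
  "bounded_coeffs av A \<Longrightarrow> bounded_coeffs av B \<Longrightarrow> bounded_coeffs av (A - B)"
  "bounded_coeffs av A \<Longrightarrow> bounded_coeffs av B \<Longrightarrow> bounded_coeffs av (A * B)"
  "bounded_coeffs av A \<Longrightarrow> bounded_coeffs av (A ^ n)"
  "bounded_coeffs av 1" "bounded_coeffs av (of_nat n)" "bounded_coeffs av fps_X"
  "bounded_coeffs av (fps_const c)"
  using F.mem_rules bounded_coeffs_fps_const bounded_coeffsI[of fps_X 1] by (auto simp: fps_X_def)

end


context Cp_field
begin

definition fps_eval :: "'a \<Rightarrow> 'a fps \<Rightarrow> 'a" where
  "fps_eval m A = C.pseries (fps_nth A) m"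

lemma fps_eval_sums:
  assumes "bounded_coeffs av A" "av m < 1"
  shows "ps_sums av (fps_nth A) m (fps_eval m A)"
  unfolding ps_sums_def fps_eval_def
  using C.pseries_sums_open_unit_ball[of "fps_nth A" "coeff_norm av A" m] assms
    av_coeff_le_coeff_norm
  by simp

lemma fps_eval_eqI: "av m < 1 \<Longrightarrow> ps_sums av (fps_nth A) m v \<Longrightarrow> fps_eval m A = v"
  unfolding ps_sums_def fps_eval_def by (intro C.pseries_eqI) auto

lemma av_fps_eval_le:
  assumes "bounded_coeffs av A" "av m < 1"
  shows "av (fps_eval m A) \<le> coeff_norm av A"
  using C.N_pseries_le[of "fps_nth A" "coeff_norm av A" m] fps_eval_sums[OF assms] assms
    av_coeff_le_coeff_norm coeff_norm_nonneg
  unfolding ps_sums_def fps_eval_def by simp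

lemma fps_eval_add:
  assumes "bounded_coeffs av A" "bounded_coeffs av B" "av m < 1"
  shows "fps_eval m (A + B) = fps_eval m A + fps_eval m B"
proof (rule fps_eval_eqI)
  have "(\<Sum>i<n. (A + B) $ i * m ^ i) = (\<Sum>i<n. A $ i * m ^ i) + (\<Sum>i<n. B $ i * m ^ i)" for n
    by (simp add: distrib_right sum.distrib)
  then show "ps_sums av (fps_nth (A + B)) m (fps_eval m A + fps_eval m B)"
    using C.tendsto_N_add[OF _ _ _ _ fps_eval_sums[OF assms(1,3), unfolded ps_sums_def]
        fps_eval_sums[OF assms(2,3), unfolded ps_sums_def]]
    unfolding ps_sums_def by simp
qed (use assms in simp)

lemma fps_eval_diff:
  assumes "bounded_coeffs av A" "bounded_coeffs av B" "av m < 1"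
  shows "fps_eval m (A - B) = fps_eval m A - fps_eval m B"
proof (rule fps_eval_eqI)
  have "(\<Sum>i<n. (A - B) $ i * m ^ i) = (\<Sum>i<n. A $ i * m ^ i) - (\<Sum>i<n. B $ i * m ^ i)" for n
    by (simp add: left_diff_distrib sum_subtractf)
  then show "ps_sums av (fps_nth (A - B)) m (fps_eval m A - fps_eval m B)"
    using C.tendsto_N_diff[OF _ _ _ _ fps_eval_sums[OF assms(1,3), unfolded ps_sums_def]
        fps_eval_sums[OF assms(2,3), unfolded ps_sums_def]]
    unfolding ps_sums_def by simp
qed (use assms in simp)

lemma av_fps_eval_diff_le:
  assumes "bounded_coeffs av A" "bounded_coeffs av B" "av m < 1"
  shows "av (fps_eval m A - fps_eval m B) \<le> coeff_norm av (A - B)"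
  using av_fps_eval_le[of "A - B" m] fps_eval_diff assms by simp

lemma fps_eval_fps_const:
  assumes "av m < 1"
  shows "fps_eval m (fps_const c) = c"
proof (rule fps_eval_eqI[OF assms])
  have partial_sums: "(\<Sum>i<n + 1. fps_const c $ i * m ^ i) = c" for n
    by (induction n) simp_all
  show "ps_sums av (fps_nth (fps_const c)) m c"
    unfolding ps_sums_def by (rule LIMSEQ_offset[where k = 1]) (simp only: partial_sums, simp)
qed

lemma fps_eval_1: "av m < 1 \<Longrightarrow> fps_eval m 1 = 1"
  using fps_eval_fps_const[of m 1] by simp

lemma fps_eval_of_nat: "av m < 1 \<Longrightarrow> fps_eval m (of_nat k) = of_nat k"
  using fps_eval_fps_const[of m "of_nat k"] by (simp add: fps_of_nat)

lemma fps_eval_X: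
  assumes "av m < 1"
  shows "fps_eval m fps_X = m"
proof (rule fps_eval_eqI[OF assms])
  have partial_sums: "(\<Sum>i<n + 2. fps_X $ i * m ^ i) = m" for n
    by (induction n) simp_all
  show "ps_sums av (fps_nth fps_X) m m"
    unfolding ps_sums_def by (rule LIMSEQ_offset[where k = 2]) (simp only: partial_sums, simp)
qed


text \<open>The partial sums of a Cauchy product differ from the product of the partial sums only by
  the terms of total degree \<open>\<ge> n\<close>.\<close>
lemma av_partial_sums_mult_le:
  assumes A: "bounded_coeffs av A" and B: "bounded_coeffs av B" and m: "av m \<le> 1"
  shows "av ((\<Sum>i<n. A $ i * m ^ i) * (\<Sum>i<n. B $ i * m ^ i) - (\<Sum>i<n. (A * B) $ i * m ^ i))
    \<le> coeff_norm av A * coeff_norm av B * av m ^ n"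
proof -
  define g where "g = (\<lambda>(i, j). A $ i * B $ j * m ^ (i + j))"
  define square where "square = {..<n} \<times> {..<n}"
  define triangle where "triangle = {(i, j). i + j < n}"
  have "(\<Sum>i<n. A $ i * m ^ i) * (\<Sum>i<n. B $ i * m ^ i) = sum g square"
    unfolding sum_product square_def sum.cartesian_product g_def
    by (intro sum.cong refl) (clarsimp simp: power_add mult_ac)
  moreover have "(\<Sum>i<n. (A * B) $ i * m ^ i) = sum g triangle"
  proof -
    have "(\<Sum>k<n. (A * B) $ k * m ^ k) = (\<Sum>k<n. \<Sum>i\<le>k. A $ i * B $ (k - i) * m ^ (i + (k - i)))"
      unfolding fps_mult_nth sum_distrib_right atLeast0AtMost by (intro sum.cong refl) simp
    then show ?thesis
      unfolding triangle_def g_def by (simp add: sum.triangle_reindex)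
  qed
  moreover have "sum g square = sum g (square - triangle) + sum g triangle"
    by (rule sum.subset_diff) (auto simp: square_def triangle_def)
  moreover have "av (sum g (square - triangle)) \<le> coeff_norm av A * coeff_norm av B * av m ^ n"
  proof (rule C.N_sum_le)
    fix x assume "x \<in> square - triangle"
    then obtain i j where ij: "x = (i, j)" "n \<le> i + j"
      unfolding triangle_def by (cases x) (auto simp: not_less)
    have "av (g x) = av (A $ i) * av (B $ j) * av m ^ (i + j)"
      unfolding g_def ij by (simp add: av_mult av_power)
    also have "\<dots> \<le> coeff_norm av A * coeff_norm av B * av m ^ n"
      using av_coeff_le_coeff_norm[OF A] av_coeff_le_coeff_norm[OF B] av_nonneg
        coeff_norm_nonneg[OF A] coeff_norm_nonneg[OF B] m ij
      by (intro mult_mono) (auto simp: power_decreasing)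
    finally show "av (g x) \<le> coeff_norm av A * coeff_norm av B * av m ^ n" .
  qed (use coeff_norm_nonneg[OF A] coeff_norm_nonneg[OF B] av_nonneg in auto)
  ultimately show ?thesis
    by simp
qed

lemma fps_eval_mult:
  assumes A: "bounded_coeffs av A" and B: "bounded_coeffs av B" and m: "av m < 1"
  shows "fps_eval m (A * B) = fps_eval m A * fps_eval m B"
proof (rule fps_eval_eqI[OF m])
  let ?a = "fps_eval m A" and ?b = "fps_eval m B"
  let ?sA = "\<lambda>n. \<Sum>i<n. A $ i * m ^ i" and ?sB = "\<lambda>n. \<Sum>i<n. B $ i * m ^ i"
  have sA: "(\<lambda>n. av (?sA n - ?a)) \<longlonglongrightarrow> 0" and sB: "(\<lambda>n. av (?sB n - ?b)) \<longlonglongrightarrow> 0"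
    using fps_eval_sums[OF A m] fps_eval_sums[OF B m] unfolding ps_sums_def by auto
  have "av (?sA n * ?sB n - ?a * ?b)
      \<le> max (coeff_norm av A * av (?sB n - ?b)) (av (?sA n - ?a) * av ?b)" for n
  proof -
    have "?sA n * ?sB n - ?a * ?b = ?sA n * (?sB n - ?b) + (?sA n - ?a) * ?b"
      by (simp add: algebra_simps)
    moreover have "av (?sA n) \<le> coeff_norm av A"
      using av_coeff_le_coeff_norm[OF A] coeff_norm_nonneg[OF A] m
      by (intro C.N_partial_sum_le) auto
    then have "av (?sA n * (?sB n - ?b)) \<le> coeff_norm av A * av (?sB n - ?b)"
      using av_nonneg by (simp add: av_mult mult_right_mono)
    ultimately show ?thesis
      using av_add[of "?sA n * (?sB n - ?b)" "(?sA n - ?a) * ?b"] by (simp add: av_mult)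
  qed
  moreover have lim: "(\<lambda>n. max (coeff_norm av A * av (?sB n - ?b)) (av (?sA n - ?a) * av ?b)) \<longlonglongrightarrow> 0"
    using tendsto_max[OF tendsto_mult_right_zero[OF sB] tendsto_mult_left_zero[OF sA]] by simp
  ultimately have product: "(\<lambda>n. av (?sA n * ?sB n - ?a * ?b)) \<longlonglongrightarrow> 0"
    using av_nonneg by (intro Lim_null_comparison[OF always_eventually lim]) simp
  have lim': "(\<lambda>n. coeff_norm av A * coeff_norm av B * av m ^ n) \<longlonglongrightarrow> 0"
    using m av_nonneg by (intro tendsto_mult_right_zero LIMSEQ_power_zero) auto
  have "(\<lambda>n. av (?sA n * ?sB n - (\<Sum>i<n. (A * B) $ i * m ^ i))) \<longlonglongrightarrow> 0"
    using av_partial_sums_mult_le[OF A B] m av_nonneg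
    by (intro Lim_null_comparison[OF always_eventually lim']) simp
  then show "ps_sums av (fps_nth (A * B)) m (?a * ?b)"
    unfolding ps_sums_def using C.tendsto_N_close[OF _ _ _ product] by simp
qed

lemma fps_eval_power:
  "bounded_coeffs av A \<Longrightarrow> av m < 1 \<Longrightarrow> fps_eval m (A ^ n) = fps_eval m A ^ n"
  by (induction n) (simp_all add: fps_eval_1 fps_eval_mult)

lemma fps_eval_sum:
  "(\<And>i. bounded_coeffs av (f i)) \<Longrightarrow> av m < 1 \<Longrightarrow>
    fps_eval m (\<Sum>i<(n::nat). f i) = (\<Sum>i<n. fps_eval m (f i))"
proof (induction n)
  case (Suc n)
  then show ?case
    using F.sum_mem[of "{..<n}" f] fps_eval_add by simp
qed (use fps_eval_fps_const[of m 0] in simp)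


lemma bounded_coeffs_inverse_1_plus_X:
  "bounded_coeffs av (inverse (1 + fps_X))" "coeff_norm av (inverse (1 + fps_X)) \<le> 1"
  by (auto intro: bounded_coeffsI coeff_norm_le simp: fps_inverse_fps_X_plus1 av_power)

lemma fps_eval_inverse_1_plus_X:
  assumes "av m < 1"
  shows "fps_eval m (inverse (1 + fps_X)) = 1 / (1 + m)"
proof -
  have "(1 + m) * fps_eval m (inverse (1 + fps_X)) = fps_eval m ((1 + fps_X) * inverse (1 + fps_X))"
    using assms bounded_coeffs_inverse_1_plus_X
    by (simp add: fps_eval_mult fps_eval_add fps_eval_1 fps_eval_X)
  also have "\<dots> = 1"
    using assms by (simp add: inverse_mult_eq_1' fps_eval_1)
  finally have "(1 + m) * fps_eval m (inverse (1 + fps_X)) = 1" .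
  moreover have "1 + m \<noteq> 0"
    using av_add_eq_right[of m 1] assms by (auto simp: add.commute)
  ultimately show ?thesis
    by (simp add: eq_divide_eq mult.commute)
qed

end


section \<open>The fixed point as a function of \<open>\<lambda>\<close>\<close>

text \<open>\<open>M\<close> bounds the coefficients of \<open>Q\<close>; the argument only needs \<open>M < 1\<close>, not the
  sharper bound \<open>\<rho>\<close> of the hypothesis.\<close>
locale Q_setting = Cp_field p av for p :: nat and av :: "'a::field_char_0 \<Rightarrow> real" +
  fixes q :: "nat \<Rightarrow> 'a" and Q :: "'a \<Rightarrow> 'a" and M :: real
  assumes av_q_le: "\<And>i. av (q i) \<le> M" and M_lt_1: "M < 1"
    and av_q_tendsto_0: "(\<lambda>i. av (q i)) \<longlonglongrightarrow> 0"
    and Q_sums: "\<And>z. av z \<le> 1 \<Longrightarrow> ps_sums av q z (Q z)"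
begin

lemma M_nonneg: "0 \<le> M"
  using av_q_le[of 0] av_nonneg[of "q 0"] by linarith

lemma M_mult_le: "0 \<le> d \<Longrightarrow> M * d \<le> d"
  using M_nonneg M_lt_1 by (simp add: mult_left_le_one_le)

lemma Q_eq_pseries: "av z \<le> 1 \<Longrightarrow> Q z = C.pseries q z"
  using Q_sums[of z] by (intro C.pseries_eqI[symmetric]) (simp_all add: ps_sums_def)

lemma av_Q_diff_le: "av z \<le> 1 \<Longrightarrow> av z' \<le> 1 \<Longrightarrow> av (Q z - Q z') \<le> M * av (z - z')"
  using C.pseries_lipschitz[of q M z z'] av_q_le M_nonneg av_q_tendsto_0 by (simp add: Q_eq_pseries)

lemma av_Q_1_le: "av (Q 1) \<le> M"
  using C.tendsto_N_le[of "\<lambda>n. \<Sum>i<n. q i * 1 ^ i" "Q 1" M] Q_sums[of 1]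
    C.N_partial_sum_le[of q M 1] av_q_le M_nonneg
  by (simp add: ps_sums_def)

definition radius :: real where
  "radius = av (Q 1) / p"

lemma radius_nonneg: "0 \<le> radius"
  and radius_lt_1: "radius < 1"
  and p_times_radius: "p * radius = av (Q 1)"
  using av_nonneg[of "Q 1"] av_Q_1_le M_lt_1 p_gt_1 by (simp_all add: radius_def field_simps)

definition Qfps :: "'a fps \<Rightarrow> 'a fps" where
  "Qfps Z = F.pseries (\<lambda>i. fps_const (q i)) Z"

lemma Qfps_sums:
  assumes "bounded_coeffs av Z" "coeff_norm av Z \<le> 1"
  shows "bounded_coeffs av (Qfps Z)"
    "(\<lambda>n. coeff_norm av ((\<Sum>i<n. fps_const (q i) * Z ^ i) - Qfps Z)) \<longlonglongrightarrow> 0"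
  using F.pseries_sums_unit_ball[of "\<lambda>i. fps_const (q i)" Z] assms av_q_tendsto_0
  unfolding Qfps_def by simp_all

lemma coeff_norm_Qfps_diff_le:
  assumes "bounded_coeffs av Z" "coeff_norm av Z \<le> 1" "bounded_coeffs av Z'" "coeff_norm av Z' \<le> 1"
  shows "coeff_norm av (Qfps Z - Qfps Z') \<le> M * coeff_norm av (Z - Z')"
  using F.pseries_lipschitz[of "\<lambda>i. fps_const (q i)" M Z Z'] assms av_q_le M_nonneg av_q_tendsto_0
  unfolding Qfps_def by simp

lemma Qfps_1: "Qfps 1 = fps_const (Q 1)"
  unfolding Qfps_def
proof (rule F.pseries_eqI)
  have "(\<Sum>i<n. fps_const (q i)) = fps_const (\<Sum>i<n. q i)" for n
    by (induction n) simp_all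
  then have "(\<Sum>i<n. fps_const (q i) * 1 ^ i) - fps_const (Q 1)
      = fps_const ((\<Sum>i<n. q i * 1 ^ i) - Q 1)" for n
    by simp
  then show "(\<lambda>n. coeff_norm av ((\<Sum>i<n. fps_const (q i) * 1 ^ i) - fps_const (Q 1))) \<longlonglongrightarrow> 0"
    using Q_sums[of 1] by (simp add: ps_sums_def)
qed simp_all

lemma fps_eval_Qfps:
  assumes Z: "bounded_coeffs av Z" "coeff_norm av Z \<le> 1" and m: "av m < 1"
  shows "fps_eval m (Qfps Z) = Q (fps_eval m Z)"
proof (rule C.tendsto_N_unique)
  let ?part = "\<lambda>n. \<Sum>i<n. fps_const (q i) * Z ^ i"
  have part: "bounded_coeffs av (?part n)" for n
    using Z F.sum_mem[of "{..<n}" "\<lambda>i. fps_const (q i) * Z ^ i"] by simp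
  have "av (fps_eval m (?part n) - fps_eval m (Qfps Z)) \<le> coeff_norm av (?part n - Qfps Z)" for n
    using av_fps_eval_diff_le part Qfps_sums(1)[OF Z] m by blast
  then show "(\<lambda>n. av (fps_eval m (?part n) - fps_eval m (Qfps Z))) \<longlonglongrightarrow> 0"
    using av_nonneg by (intro Lim_null_comparison[OF always_eventually Qfps_sums(2)[OF Z]]) simp
  have "fps_eval m (?part n) = (\<Sum>i<n. q i * fps_eval m Z ^ i)" for n
    using Z m by (simp add: fps_eval_sum fps_eval_mult fps_eval_fps_const fps_eval_power)
  moreover have "av (fps_eval m Z) \<le> 1"
    using av_fps_eval_le[OF Z(1) m] Z(2) by simp
  ultimately show "(\<lambda>n. av (fps_eval m (?part n) - Q (fps_eval m Z))) \<longlonglongrightarrow> 0"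
    using Q_sums unfolding ps_sums_def by simp
qed simp_all


lemma fps_fixed_point_exists:
  "\<exists>W. bounded_coeffs av W \<and> coeff_norm av W \<le> radius \<and>
     fix_map p (inverse (1 + fps_X)) Qfps W = W"
proof -
  have ball: "bounded_coeffs av (1 + W) \<and> coeff_norm av (1 + W) \<le> 1"
    if "bounded_coeffs av W" "coeff_norm av W \<le> radius" for W
    using F.N_1_plus_le_1[of W] radius_lt_1 that by simp
  have L: "inverse (1 + fps_X) \<in> {A. bounded_coeffs av A}" "coeff_norm av (inverse (1 + fps_X)) \<le> 1"
    using bounded_coeffs_inverse_1_plus_X by simp_all
  have Qfps_mem: "Qfps (1 + W) \<in> {A. bounded_coeffs av A}"
    if "W \<in> {A. bounded_coeffs av A}" "coeff_norm av W \<le> radius" for W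
    using Qfps_sums(1) ball that by simp
  have Qfps_lip: "coeff_norm av (Qfps (1 + W) - Qfps (1 + W')) \<le> coeff_norm av (W - W')"
    if "W \<in> {A. bounded_coeffs av A}" "coeff_norm av W \<le> radius"
      "W' \<in> {A. bounded_coeffs av A}" "coeff_norm av W' \<le> radius" for W W'
  proof -
    have "coeff_norm av (Qfps (1 + W) - Qfps (1 + W')) \<le> M * coeff_norm av (W - W')"
      using coeff_norm_Qfps_diff_le[of "1 + W" "1 + W'"] ball that by simp
    then show ?thesis
      using M_mult_le F.N_nonneg[of "W - W'"] that by (simp add: order_trans)
  qed
  have "coeff_norm av (Qfps 1) \<le> p * radius"
    by (simp add: Qfps_1 p_times_radius)
  from F.fix_map_has_fixed_point[OF L radius_nonneg radius_lt_1 Qfps_mem Qfps_lip this]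
  show ?thesis
    by auto
qed

lemma fps_eval_fix_map:
  assumes L: "bounded_coeffs av L" and W: "bounded_coeffs av W" "coeff_norm av W \<le> 1"
    and m: "av m < 1"
  shows "fps_eval m (fix_map p L Qfps W) = fix_map p (fps_eval m L) Q (fps_eval m W)"
proof -
  have "fps_eval m (1 + W) = 1 + fps_eval m W"
    using W m by (simp add: fps_eval_add fps_eval_1)
  moreover have "fps_eval m (Qfps (1 + W)) = Q (fps_eval m (1 + W))"
    using F.N_1_plus_le_1[of W] W m by (intro fps_eval_Qfps) simp_all
  moreover have "bounded_coeffs av (Qfps (1 + W))"
    using F.N_1_plus_le_1[of W] W by (intro Qfps_sums(1)) simp_all
  ultimately show ?thesis
    using L W m unfolding fix_map_def
    by (simp add: fps_eval_add fps_eval_diff fps_eval_mult fps_eval_power fps_eval_of_nat)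
qed

lemma fps_eval_fixed_point:
  assumes W: "bounded_coeffs av W" "coeff_norm av W \<le> radius"
    "fix_map p (inverse (1 + fps_X)) Qfps W = W"
    and lam: "av (lam - 1) < 1"
  shows "av (fps_eval (lam - 1) W) \<le> radius"
    "fix_map p (1 / lam) Q (fps_eval (lam - 1) W) = fps_eval (lam - 1) W"
proof -
  show "av (fps_eval (lam - 1) W) \<le> radius"
    using av_fps_eval_le[OF W(1) lam] W(2) by simp
  have "fps_eval (lam - 1) (inverse (1 + fps_X)) = 1 / lam"
    using fps_eval_inverse_1_plus_X[OF lam] by simp
  then show "fix_map p (1 / lam) Q (fps_eval (lam - 1) W) = fps_eval (lam - 1) W"
    using fps_eval_fix_map[of "inverse (1 + fps_X)" W "lam - 1"] bounded_coeffs_inverse_1_plus_X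
      W lam radius_lt_1 by simp
qed

lemma fixed_point_unique:
  assumes lam: "av (lam - 1) < 1"
    and w: "av w \<le> radius" "fix_map p (1 / lam) Q w = w"
    and w': "av w' \<le> radius" "fix_map p (1 / lam) Q w' = w'"
  shows "w = w'"
proof (rule C.fix_map_fixed_point_unique)
  show "av (1 / lam) \<le> 1"
    using av_eq_1_if_near_1[OF lam] by (simp add: av_divide)
  show "av (Q (1 + v) - Q (1 + v')) \<le> av (v - v')" if "av v \<le> radius" "av v' \<le> radius" for v v'
  proof -
    have "av (1 + v) \<le> 1" "av (1 + v') \<le> 1"
      using C.N_1_plus_le_1 that radius_lt_1 by simp_all
    then have "av (Q (1 + v) - Q (1 + v')) \<le> M * av (v - v')"
      using av_Q_diff_le by fastforce
    then show ?thesis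
      using M_mult_le av_nonneg[of "v - v'"] by (simp add: order_trans)
  qed
qed (use assms radius_lt_1 in simp_all)

lemma fixed_point_holomorphic:
  "\<exists>h. (\<forall>lam. av (lam - 1) < 1 \<longrightarrow>
          av (h lam - 1) \<le> av (Q 1) / real p \<and>
          Pfam p lam (h lam) + Q (h lam) = h lam \<and>
          (\<forall>z. av (z - 1) \<le> av (Q 1) / real p \<and> Pfam p lam z + Q z = z \<longrightarrow> z = h lam))
     \<and> holo_Lambda av h"
proof -
  obtain W where W: "bounded_coeffs av W" "coeff_norm av W \<le> radius"
    "fix_map p (inverse (1 + fps_X)) Qfps W = W"
    using fps_fixed_point_exists by blast
  define h where "h lam = fps_eval (lam - 1) (1 + W)" for lam
  have h: "h lam = 1 + fps_eval (lam - 1) W" if "av (lam - 1) < 1" for lam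
    using W that by (simp add: h_def fps_eval_add fps_eval_1)
  have fixed_iff: "Pfam p lam z + Q z = z \<longleftrightarrow> fix_map p (1 / lam) Q (z - 1) = z - 1"
    if "av (lam - 1) < 1" for lam z
  proof -
    have "lam \<noteq> 0"
      using av_eq_1_if_near_1[OF that] by auto
    then show ?thesis
      using fix_map_eq_iff[of p lam Q "z - 1"] p_gt_1 by simp
  qed
  show ?thesis
  proof (intro exI conjI allI impI)
    show "holo_Lambda av h"
      unfolding holo_Lambda_def h_def using W fps_eval_sums[of "1 + W"] by auto
    fix lam assume lam: "av (lam - 1) < 1"
    note w = fps_eval_fixed_point[OF W lam]
    show "av (h lam - 1) \<le> av (Q 1) / real p"
      using w h[OF lam] by (simp add: radius_def)
    show "Pfam p lam (h lam) + Q (h lam) = h lam"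
      using w h[OF lam] fixed_iff[OF lam] by simp
    show "z = h lam" if "av (z - 1) \<le> av (Q 1) / real p \<and> Pfam p lam z + Q z = z" for z
      using fixed_point_unique[OF lam _ _ w(1,2), of "z - 1"] that fixed_iff[OF lam] h[OF lam]
      by (simp add: radius_def)
  qed
qed

end

lemma (in Cp_field) Q_setting_if_convergent_beyond_unit_disc:
  assumes rhat_gt: "rhat > 1"
    and q_conv: "(\<lambda>i. av (q i) * rhat ^ i) \<longlonglongrightarrow> 0"
    and Q_def: "\<forall>z. av z \<le> rhat \<longrightarrow> ps_sums av q z (Q z)"
    and q_norm: "(SUP i. av (q i) * rhat ^ i) < real p powr (- 1 / (real p - 1))"
  shows "Q_setting p av q Q (SUP i. av (q i) * rhat ^ i)"
proof
  have q_le: "av (q i) \<le> av (q i) * rhat ^ i" for i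
    using rhat_gt av_nonneg[of "q i"] by (simp add: one_le_power mult_le_cancel_left1)
  have "bdd_above (range (\<lambda>i. av (q i) * rhat ^ i))"
    using q_conv by (intro Bseq_bdd_above convergent_imp_Bseq convergentI)
  then show "av (q i) \<le> (SUP i. av (q i) * rhat ^ i)" for i
    using q_le by (meson cSUP_upper2 UNIV_I)
  have "real p powr (- 1 / (real p - 1)) \<le> real p powr 0"
    using p_gt_1 by (intro powr_mono) (auto simp: divide_nonpos_pos)
  then show "(SUP i. av (q i) * rhat ^ i) < 1"
    using q_norm p_gt_1 by simp
  show "(\<lambda>i. av (q i)) \<longlonglongrightarrow> 0"
    using q_le av_nonneg by (intro Lim_null_comparison[OF always_eventually q_conv]) simp
  show "ps_sums av q z (Q z)" if "av z \<le> 1" for z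
    using Q_def that rhat_gt by simp
qed

theorem proposition3p2:
  fixes p :: nat and av :: "'a::field_char_0 \<Rightarrow> real"
    and rhat :: real and q :: "nat \<Rightarrow> 'a" and Q :: "'a \<Rightarrow> 'a"
  assumes Cp: "is_Cp p av"
    and rhat_val: "\<exists>w. w \<noteq> 0 \<and> av w = rhat" and rhat_gt: "rhat > 1"
    and q_conv: "(\<lambda>i. av (q i) * rhat ^ i) \<longlonglongrightarrow> 0"
    and Q_def: "\<forall>z. av z \<le> rhat \<longrightarrow> ps_sums av q z (Q z)"
    and q_norm: "(SUP i. av (q i) * rhat ^ i) < real p powr (- 1 / (real p - 1))"
  shows "\<exists>h. (\<forall>lam. av (lam - 1) < 1 \<longrightarrow>
                 av (h lam - 1) \<le> av (Q 1) / real p \<and>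
                 Pfam p lam (h lam) + Q (h lam) = h lam \<and>
                 (\<forall>z. av (z - 1) \<le> av (Q 1) / real p \<and> Pfam p lam z + Q z = z
                      \<longrightarrow> z = h lam))
             \<and> holo_Lambda av h"
proof -
  interpret Cp_field p av
    by unfold_locales (rule Cp)
  interpret Q_setting p av q Q "SUP i. av (q i) * rhat ^ i"
    using Q_setting_if_convergent_beyond_unit_disc[OF rhat_gt q_conv Q_def q_norm] .
  show ?thesis
    by (rule fixed_point_holomorphic)
qed

end
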